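(* Let $G$ be a $c$-edge-colored multigraph (without loops) with $n$ vertices such that every vertex is incident to at least two edges of different colors. If $\delta_{dym}(x)\ge (n+1)/2$ for every $x\in V(G)$, and at least one vertex is incident to at least three edges of pairwise different colors, then $G$ has a properly colored hamiltonian cycle.
   Context: A $c$-edge-colored multigraph is a finite multigraph without loops (parallel edges allowed) together with a map $\phi:E(G)\to\{1,\ldots,c\}$. For $u,v\in V(G)$, $E_{uv}$ is the set of edges with end vertices $u$ and $v$. Here $\delta_{dym}(x)$ is the number of vertices $y$ such that $E_{xy}$ contains two edges of different colors. A properly colored (PC) hamiltonian cycle is a cyclic sequence $(x_1,f_1,x_2,f_2,\ldots,x_n,f_n,x_1)$ containing every vertex exactly once, with $f_i\in E_{x_ix_{i+1}}$ (indices mod $n$), such that any two consecutive edges, including $f_n$ and $f_1$, have different colors. *)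

theory Defs
  imports Main
begin

text \<open>A c-edge-colored multigraph: finite vertex set V, finite edge set E (edges are
 abstract objects, so parallel edges are allowed), an endpoint map ends with
 ends e a two-element subset of V (no loops), and a colouring phi into {1..c}.\<close>

definition colored_multigraph ::
  "'a set \<Rightarrow> 'e set \<Rightarrow> ('e \<Rightarrow> 'a set) \<Rightarrow> ('e \<Rightarrow> nat) \<Rightarrow> nat \<Rightarrow> bool" where
  "colored_multigraph V E ends phi c \<longleftrightarrow>
     finite V \<and> finite E \<and>
     (\<forall>e\<in>E. ends e \<subseteq> V \<and> card (ends e) = 2) \<and>
     (\<forall>e\<in>E. phi e \<in> {1..c})"

definition edges_between :: "'e set \<Rightarrow> ('e \<Rightarrow> 'a set) \<Rightarrow> 'a \<Rightarrow> 'a \<Rightarrow> 'e set" where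
  "edges_between E ends x y = {e \<in> E. ends e = {x, y}}"

definition delta_dym ::
  "'a set \<Rightarrow> 'e set \<Rightarrow> ('e \<Rightarrow> 'a set) \<Rightarrow> ('e \<Rightarrow> nat) \<Rightarrow> 'a \<Rightarrow> nat" where
  "delta_dym V E ends phi x =
     card {y \<in> V. \<exists>e\<in>edges_between E ends x y. \<exists>f\<in>edges_between E ends x y. phi e \<noteq> phi f}"

text \<open>A PC hamiltonian cycle (x_1,f_1,...,x_n,f_n,x_1), given by the vertex list xs and
 the edge list fs, indices taken mod n.\<close>
definition pc_hamiltonian_cycle ::
  "'a set \<Rightarrow> 'e set \<Rightarrow> ('e \<Rightarrow> 'a set) \<Rightarrow> ('e \<Rightarrow> nat) \<Rightarrow> 'a list \<Rightarrow> 'e list \<Rightarrow> bool" where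
  "pc_hamiltonian_cycle V E ends phi xs fs \<longleftrightarrow>
     (let n = length xs in
       distinct xs \<and> set xs = V \<and> length fs = n \<and>
       (\<forall>i<n. fs ! i \<in> edges_between E ends (xs ! i) (xs ! ((i + 1) mod n))) \<and>
       (\<forall>i<n. phi (fs ! i) \<noteq> phi (fs ! ((i + 1) mod n))))"

definition has_pc_hamiltonian_cycle ::
  "'a set \<Rightarrow> 'e set \<Rightarrow> ('e \<Rightarrow> 'a set) \<Rightarrow> ('e \<Rightarrow> nat) \<Rightarrow> bool" where
  "has_pc_hamiltonian_cycle V E ends phi \<longleftrightarrow>
     (\<exists>xs fs. pc_hamiltonian_cycle V E ends phi xs fs)"

end

(*
  Call x and y dym-adjacent if E_xy contains two edges of different colours.  By hypothesis
  this graph D has minimum degree at least (n+1)/2, so Posa's rotation argument shows that every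
  edge of D lies on a Hamiltonian cycle of D and that D is Hamiltonian-connected.

  Along a Hamiltonian path of D every edge offers two colours, so edges can be chosen greedily
  with consecutive colours different; closing the path by an edge e gives a PC Hamiltonian cycle
  as soon as the last edge of the path offers two colours different from the colour of e.  Hence
  a PC Hamiltonian cycle exists if two consecutive edges of some Hamiltonian cycle of D offer
  different colour sets.  Otherwise a Hamiltonian cycle of D offers one colour set S along all its
  edges, and a rotation argument with a chord shows that every edge of D offers exactly S.
  Finally some edge xy has a colour avoiding two colours of S: any edge of D if S has a third
  colour, and otherwise an edge at the three-coloured vertex with a colour outside S.  Closing a
  Hamiltonian path of D from y to x by this edge gives a PC Hamiltonian cycle.
*)

theory Submission
  imports Defs
begin

section \<open>Lists read cyclically\<close>

definition cyclically :: "('a \<Rightarrow> 'a \<Rightarrow> bool) \<Rightarrow> 'a list \<Rightarrow> bool" where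
  "cyclically R xs \<longleftrightarrow> successively R xs \<and> (xs \<noteq> [] \<longrightarrow> R (last xs) (hd xs))"

lemma cyclically_Cons: "cyclically R (x # xs) \<longleftrightarrow> successively R (x # xs @ [x])"
  using successively_append_iff[of R "x # xs" "[x]"] by (simp add: cyclically_def)

lemma cyclically_append_commute: "cyclically R (xs @ ys) \<longleftrightarrow> cyclically R (ys @ xs)"
proof (cases "xs = [] \<or> ys = []")
  case False
  then show ?thesis by (simp add: cyclically_def successively_append_iff) blast
qed auto

lemma cyclically_rotate: "cyclically R (rotate n xs) \<longleftrightarrow> cyclically R xs"
  by (metis append_take_drop_id cyclically_append_commute rotate_drop_take)

lemma successively_rev_symmetric:
  assumes "symp R"
  shows "successively R (rev xs) \<longleftrightarrow> successively R xs"
  unfolding successively_rev by (intro iffI; erule successively_mono) (auto intro: sympD[OF assms])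

lemma cyclically_rev:
  assumes "symp R"
  shows "cyclically R (rev xs) \<longleftrightarrow> cyclically R xs"
  using successively_rev_symmetric[OF assms]
  by (auto simp: cyclically_def hd_rev last_rev intro: sympD[OF assms])

lemma cyclically_conv_nth:
  "cyclically R xs \<longleftrightarrow> (\<forall>i<length xs. R (xs ! i) (xs ! (Suc i mod length xs)))"
proof (cases xs rule: rev_cases)
  case (snoc ys y)
  have split: "(\<forall>i<length xs. Q i) \<longleftrightarrow> (\<forall>i<length ys. Q i) \<and> Q (length ys)" for Q
    using snoc by (auto simp: less_Suc_eq)
  have "xs ! length ys = y" "hd xs = xs ! 0" using snoc by (simp_all add: hd_conv_nth)
  then show ?thesis
    unfolding split cyclically_def successively_conv_nth using snoc by simp
qed (simp add: cyclically_def)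

lemma successively_zip_tl:
  assumes "successively R xs" and "(x, y) \<in> set (zip xs (tl xs))"
  shows "R x y"
proof -
  obtain n where "xs ! n = x" "tl xs ! n = y" "n < length (tl xs)"
    using assms(2) by (auto simp: in_set_zip)
  then show ?thesis using successively_nth[OF assms(1), of n] by (simp add: nth_tl)
qed

lemma successively_const_of_blocks:
  assumes "\<And>X a b c Y. x # y # ys = X @ a # b # c # Y \<Longrightarrow> g a b = g b c"
  shows "successively (\<lambda>a b. g a b = g x y) (x # y # ys)"
  using assms
proof (induction ys arbitrary: x y)
  case (Cons z zs)
  have "g x y = g y z" using Cons.prems[of "[]"] by simp
  moreover have "successively (\<lambda>a b. g a b = g y z) (y # z # zs)"
  proof (rule Cons.IH)
    fix X a b c Y
    assume "y # z # zs = X @ a # b # c # Y"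
    then have "x # y # z # zs = (x # X) @ a # b # c # Y" by simp
    then show "g a b = g b c" by (rule Cons.prems)
  qed
  ultimately show ?case by simp
qed simp

lemma cyclically_const_of_rotations:
  assumes blocks: "\<And>k a b c X. rotate k Q = a # b # c # X \<Longrightarrow> g a b = g b c"
    and Q: "Q = x # y # ys" and "ys \<noteq> []"
  shows "cyclically (\<lambda>a b. g a b = g x y) Q"
proof -
  have "successively (\<lambda>a b. g a b = g x y) Q"
    unfolding Q
  proof (rule successively_const_of_blocks)
    fix X a b c Y
    assume "x # y # ys = X @ a # b # c # Y"
    then have "rotate (length X) Q = a # b # c # Y @ X" using Q by (simp add: rotate_append)
    then show "g a b = g b c" by (rule blocks)
  qed
  moreover have "g (last Q) x = g x y"
  proof -
    have "Q = (x # y # butlast ys) @ [last Q]"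
      using Q \<open>ys \<noteq> []\<close> by simp
    then have "rotate (length (x # y # butlast ys)) Q = last Q # x # y # butlast ys"
      by (metis append_Cons append_Nil rotate_append)
    then show ?thesis using blocks by blast
  qed
  ultimately show ?thesis using Q by (simp add: cyclically_def)
qed

section \<open>Posa rotation\<close>

lemma card_nth_indices:
  assumes "distinct xs" and "{x. Q x} \<subseteq> set xs"
  shows "card {i. i < length xs \<and> Q (xs ! i)} = card {x. Q x}"
proof (rule bij_betw_same_card)
  have "nth xs ` {i. i < length xs \<and> Q (xs ! i)} = {x. Q x}"
  proof (intro equalityI subsetI)
    fix x assume "x \<in> {x. Q x}"
    moreover from this have "x \<in> set xs" using assms(2) by blast
    then obtain i where "i < length xs" "xs ! i = x" by (auto simp: in_set_conv_nth)
    ultimately show "x \<in> nth xs ` {i. i < length xs \<and> Q (xs ! i)}" by auto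
  qed auto
  then show "bij_betw (nth xs) {i. i < length xs \<and> Q (xs ! i)} {x. Q x}"
    unfolding bij_betw_def using assms(1) by (simp add: inj_on_nth)
qed

lemma ex_mem_Int_avoiding:
  assumes "A \<union> B \<subseteq> {..<m}" and "m + 1 < card A + card B"
  shows "\<exists>i\<in>A \<inter> B. i \<noteq> j"
proof (rule ccontr)
  assume "\<not> (\<exists>i\<in>A \<inter> B. i \<noteq> j)"
  then have "card (A \<inter> B) \<le> card {j}" by (intro card_mono) auto
  moreover have "finite A" "finite B" using assms(1) by (auto intro: finite_subset)
  then have "card A + card B = card (A \<union> B) + card (A \<inter> B)" by (rule card_Un_Int)
  moreover have "card (A \<union> B) \<le> m" using assms(1) by (metis card_lessThan card_mono finite_lessThan)
  ultimately show False using assms(2) by simp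
qed

lemma crossing_index:
  assumes irrefl: "irreflp R" and "distinct P"
    and hd_nbrs: "{y. R (hd P) y} \<subseteq> set P" and last_nbrs: "{y. R (last P) y} \<subseteq> set P"
    and deg: "length P < card {y. R (hd P) y} + card {y. R (last P) y}"
  shows "\<exists>i. Suc i < length P \<and> Suc i \<noteq> j \<and> R (hd P) (P ! Suc i) \<and> R (last P) (P ! i)"
proof -
  define k where "k = length P"
  define A where "A = {i. Suc i < k \<and> R (hd P) (P ! Suc i)}"
  define B where "B = {i. Suc i < k \<and> R (last P) (P ! i)}"
  have "P \<noteq> []"
  proof
    assume "P = []"
    with hd_nbrs last_nbrs have "{y. R (hd P) y} = {}" "{y. R (last P) y} = {}" by auto
    with deg show False by simp
  qed
  have "Suc ` A = {i. i < k \<and> R (hd P) (P ! i)}"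
  proof (intro equalityI subsetI)
    fix i assume i: "i \<in> {i. i < k \<and> R (hd P) (P ! i)}"
    have "i \<noteq> 0"
    proof
      assume "i = 0"
      with i \<open>P \<noteq> []\<close> have "R (hd P) (hd P)" by (simp add: hd_conv_nth)
      with irrefl show False by (blast dest: irreflpD)
    qed
    then show "i \<in> Suc ` A" using i by (cases i) (auto simp: A_def)
  qed (auto simp: A_def)
  then have card_A: "card A = card {y. R (hd P) y}"
    using card_nth_indices[OF \<open>distinct P\<close> hd_nbrs] card_image[OF inj_Suc[THEN inj_on_subset]]
    by (metis k_def subset_UNIV)
  have "B = {i. i < k \<and> R (last P) (P ! i)}"
  proof (intro equalityI subsetI)
    fix i assume i: "i \<in> {i. i < k \<and> R (last P) (P ! i)}"
    have "Suc i < k"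
    proof (rule ccontr)
      assume "\<not> Suc i < k"
      moreover have "i < k" using i by simp
      ultimately have "i = length P - 1" unfolding k_def by linarith
      with i \<open>P \<noteq> []\<close> have "R (last P) (last P)" by (simp add: last_conv_nth)
      with irrefl show False by (blast dest: irreflpD)
    qed
    then show "i \<in> B" using i by (simp add: B_def)
  qed (auto simp: B_def)
  then have card_B: "card B = card {y. R (last P) y}"
    using card_nth_indices[OF \<open>distinct P\<close> last_nbrs] by (simp add: k_def)
  have "A \<union> B \<subseteq> {..<k - 1}" by (auto simp: A_def B_def)
  moreover have "k - 1 + 1 < card A + card B"
    using deg card_A card_B \<open>P \<noteq> []\<close> by (simp add: k_def)
  ultimately obtain i where "i \<in> A \<inter> B" "i \<noteq> j - 1" using ex_mem_Int_avoiding by blast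
  then show ?thesis by (auto simp: A_def B_def k_def)
qed

lemma cyclically_append_rev:
  assumes sym: "symp R"
    and "successively R (P1 @ P2)" and "P1 \<noteq> []" and "P2 \<noteq> []"
    and "R (hd P1) (hd P2)" and "R (last P1) (last P2)"
  shows "cyclically R (P1 @ rev P2)"
  using assms(2-) successively_rev_symmetric[OF sym, of P2] sympD[OF sym]
  by (auto simp: cyclically_def successively_append_iff hd_rev last_rev)

text \<open>The split can avoid any prescribed position \<open>j\<close>, so it can keep any prescribed edge of \<open>P\<close>.\<close>

lemma posa_split:
  assumes sym: "symp R" and irrefl: "irreflp R"
    and "distinct P" and "successively R P"
    and "{y. R (hd P) y} \<subseteq> set P" and "{y. R (last P) y} \<subseteq> set P"
    and "length P < card {y. R (hd P) y} + card {y. R (last P) y}"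
  shows "\<exists>P1 P2. P = P1 @ P2 \<and> P1 \<noteq> [] \<and> P2 \<noteq> [] \<and> length P1 \<noteq> j \<and> cyclically R (P1 @ rev P2)"
proof -
  obtain i where i: "Suc i < length P" "Suc i \<noteq> j" "R (hd P) (P ! Suc i)" "R (last P) (P ! i)"
    using crossing_index[OF irrefl assms(3,5-7)] by blast
  define P1 where "P1 = take (Suc i) P"
  define P2 where "P2 = drop (Suc i) P"
  have "P1 \<noteq> []" "P2 \<noteq> []" "length P1 \<noteq> j" using i by (auto simp: P1_def P2_def)
  moreover have "hd P1 = hd P" by (simp add: P1_def)
  moreover have "last P1 = P ! i" "hd P2 = P ! Suc i" "last P2 = last P"
    using i by (simp_all add: P1_def P2_def take_Suc_conv_app_nth hd_drop_conv_nth)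
  moreover have "P = P1 @ P2" by (simp add: P1_def P2_def)
  ultimately show ?thesis
    using cyclically_append_rev[OF sym, of P1 P2] i \<open>successively R P\<close> sympD[OF sym] by metis
qed

lemma split_keeps_block:
  assumes "P1 @ P2 = X @ M @ Y"
    and "length P1 \<le> length X \<or> length X + length M \<le> length P1"
  shows "\<exists>X' Y'. P1 @ rev P2 = X' @ M @ Y' \<or> P1 @ rev P2 = X' @ rev M @ Y'"
  using assms(2)
proof
  assume "length P1 \<le> length X"
  then have "P2 = drop (length P1) X @ M @ Y"
    using assms(1) by (simp add: append_eq_append_conv_if)
  then have "P1 @ rev P2 = (P1 @ rev Y) @ rev M @ rev (drop (length P1) X)" by simp
  then show ?thesis by blast
next
  assume "length X + length M \<le> length P1"
  then have "take (length X + length M) P1 = X @ M"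
    using assms(1)[symmetric] append_eq_append_conv_if[of "X @ M" Y P1 P2] by simp
  then have "P1 = X @ M @ drop (length X + length M) P1"
    by (metis append.assoc append_take_drop_id)
  then show ?thesis by (metis append.assoc)
qed

section \<open>Hamiltonian paths and cycles\<close>

definition hamiltonian_path :: "'a set \<Rightarrow> ('a \<Rightarrow> 'a \<Rightarrow> bool) \<Rightarrow> 'a list \<Rightarrow> bool" where
  "hamiltonian_path S R P \<longleftrightarrow> distinct P \<and> set P = S \<and> successively R P"

definition hamiltonian_cycle :: "'a set \<Rightarrow> ('a \<Rightarrow> 'a \<Rightarrow> bool) \<Rightarrow> 'a list \<Rightarrow> bool" where
  "hamiltonian_cycle S R Q \<longleftrightarrow> distinct Q \<and> set Q = S \<and> cyclically R Q"

lemma hamiltonian_cycle_append_commute: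
  "hamiltonian_cycle S R (xs @ ys) \<longleftrightarrow> hamiltonian_cycle S R (ys @ xs)"
  by (auto simp: hamiltonian_cycle_def cyclically_append_commute)

lemma hamiltonian_cycle_rotate: "hamiltonian_cycle S R (rotate n Q) \<longleftrightarrow> hamiltonian_cycle S R Q"
  by (simp add: hamiltonian_cycle_def cyclically_rotate)

lemma hamiltonian_cycle_rev:
  assumes "symp R"
  shows "hamiltonian_cycle S R (rev Q) \<longleftrightarrow> hamiltonian_cycle S R Q"
  by (simp add: hamiltonian_cycle_def cyclically_rev[OF assms])

lemma hamiltonian_cycle_block_to_front:
  assumes sym: "symp R" and Q: "hamiltonian_cycle S R Q"
    and "Q = X @ M @ Y \<or> Q = X @ rev M @ Y"
  shows "\<exists>Z. hamiltonian_cycle S R (M @ Z)"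
  using assms(3)
proof
  assume "Q = X @ M @ Y"
  then have "hamiltonian_cycle S R (M @ Y @ X)"
    using Q hamiltonian_cycle_append_commute[of S R X "M @ Y"] by simp
  then show ?thesis by blast
next
  assume "Q = X @ rev M @ Y"
  then have "hamiltonian_cycle S R (rev Y @ M @ rev X)"
    using Q hamiltonian_cycle_rev[OF sym, of S Q] by simp
  then have "hamiltonian_cycle S R (M @ rev X @ rev Y)"
    using hamiltonian_cycle_append_commute[of S R "rev Y" "M @ rev X"] by simp
  then show ?thesis by blast
qed

lemma posa_hamiltonian_cycle:
  assumes sym: "symp R" and irrefl: "irreflp R"
    and P: "hamiltonian_path S R P"
    and "{y. R (hd P) y} \<subseteq> S" and "{y. R (last P) y} \<subseteq> S"
    and "card S < card {y. R (hd P) y} + card {y. R (last P) y}"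
  shows "\<exists>P1 P2. P = P1 @ P2 \<and> length P1 \<noteq> j \<and> hamiltonian_cycle S R (P1 @ rev P2)"
proof -
  have "distinct P" "set P = S" "successively R P" using P by (auto simp: hamiltonian_path_def)
  moreover from this have "length P = card S" by (metis distinct_card)
  ultimately obtain P1 P2 where "P = P1 @ P2" "length P1 \<noteq> j" "cyclically R (P1 @ rev P2)"
    using posa_split[OF sym irrefl, of P j] assms(4-6) by auto
  with \<open>distinct P\<close> \<open>set P = S\<close> show ?thesis by (auto simp: hamiltonian_cycle_def)
qed

lemma hamiltonian_cycle_keeps_block:
  assumes sym: "symp R" and cycle: "hamiltonian_cycle S R (P1 @ rev P2)"
    and "P1 @ P2 = X @ M @ Y"
    and "length P1 \<le> length X \<or> length X + length M \<le> length P1"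
  shows "\<exists>Z. hamiltonian_cycle S R (M @ Z)"
proof -
  obtain X' Y' where "P1 @ rev P2 = X' @ M @ Y' \<or> P1 @ rev P2 = X' @ rev M @ Y'"
    using split_keeps_block[OF assms(3,4)] by blast
  then show ?thesis using hamiltonian_cycle_block_to_front[OF sym cycle, of X' M Y'] by blast
qed

lemma posa_cycle_through_edge:
  assumes sym: "symp R" and irrefl: "irreflp R"
    and P: "hamiltonian_path S R P" and "P = A @ u # v # B"
    and "{y. R (hd P) y} \<subseteq> S" and "{y. R (last P) y} \<subseteq> S"
    and "card S < card {y. R (hd P) y} + card {y. R (last P) y}"
  shows "\<exists>C. hamiltonian_cycle S R (u # v # C)"
proof -
  obtain P1 P2 where "P = P1 @ P2" "length P1 \<noteq> Suc (length A)"
    and cycle: "hamiltonian_cycle S R (P1 @ rev P2)"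
    using posa_hamiltonian_cycle[OF sym irrefl P assms(5-7)] by blast
  moreover from this have "P1 @ P2 = A @ [u, v] @ B" using \<open>P = A @ u # v # B\<close> by simp
  ultimately have "\<exists>Z. hamiltonian_cycle S R ([u, v] @ Z)"
    by (intro hamiltonian_cycle_keeps_block[OF sym cycle, of A _ B]) auto
  then show ?thesis by simp
qed

lemma path_through_edge_of_cycle:
  assumes sym: "symp R" and Q: "hamiltonian_cycle S R (u # v # C)"
    and "z \<notin> S" and "c \<in> S" and "R z c"
  shows "\<exists>P. hamiltonian_path (insert z S) R P \<and> (\<exists>A B. P = A @ u # v # B)"
proof (cases "c = v")
  case True
  have "cyclically R (C @ [u, v])"
    using Q cyclically_append_commute[of R "[u, v]" C] by (simp add: hamiltonian_cycle_def)
  then have "successively R (C @ [u, v, z])"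
    using \<open>R z c\<close> True sympD[OF sym] by (auto simp: cyclically_def successively_append_iff)
  moreover have "distinct (C @ [u, v, z])" "set (C @ [u, v, z]) = insert z S"
    using Q \<open>z \<notin> S\<close> by (auto simp: hamiltonian_cycle_def)
  moreover have "C @ [u, v, z] = C @ u # v # [z]" by simp
  ultimately show ?thesis unfolding hamiltonian_path_def by blast
next
  case False
  obtain X Y where XY: "u # v # C = X @ c # Y"
    using Q \<open>c \<in> S\<close> by (metis hamiltonian_cycle_def split_list)
  obtain A B where AB: "c # Y @ X = A @ u # v # B"
  proof (cases X)
    case Nil
    with XY have "c # Y @ X = [] @ u # v # C" by simp
    then show ?thesis by (rule that)
  next
    case (Cons x X')
    with XY False obtain X'' where "X = u # v # X''"
      by (cases X') auto
    then have "c # Y @ X = (c # Y) @ u # v # X''" by simp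
    then show ?thesis by (rule that)
  qed
  have "hamiltonian_cycle S R (c # Y @ X)"
    using Q XY hamiltonian_cycle_append_commute[of S R X "c # Y"] by simp
  then have "hamiltonian_path (insert z S) R (z # c # Y @ X)"
    using \<open>R z c\<close> \<open>z \<notin> S\<close> by (auto simp: hamiltonian_cycle_def hamiltonian_path_def cyclically_def)
  moreover have "z # c # Y @ X = (z # A) @ u # v # B" using AB by simp
  ultimately show ?thesis by blast
qed

section \<open>Graphs of minimum degree at least (n+1)/2\<close>

locale dense_graph =
  fixes V :: "'a set" and R :: "'a \<Rightarrow> 'a \<Rightarrow> bool"
  assumes finite_V: "finite V"
    and sym: "symp R"
    and irrefl: "irreflp R"
    and adjacent_in_V: "R x y \<Longrightarrow> x \<in> V"
    and min_degree: "x \<in> V \<Longrightarrow> card V + 1 \<le> 2 * card {y. R x y}"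
begin

lemma neighbours_subset: "{y. R x y} \<subseteq> V - {x}"
  using adjacent_in_V sympD[OF sym] irreflpD[OF irrefl] by blast

lemma card_neighbours_le:
  assumes "x \<in> X" and "X \<subseteq> V" and "{y. R x y} \<subseteq> X"
  shows "card {y. R x y} + 1 \<le> card X"
proof -
  have "finite X" using \<open>X \<subseteq> V\<close> finite_V by (rule finite_subset)
  have "{y. R x y} \<subseteq> X - {x}" using assms(3) irreflpD[OF irrefl] by blast
  then have "card {y. R x y} \<le> card (X - {x})" using \<open>finite X\<close> by (intro card_mono) auto
  also have "\<dots> = card X - 1" using \<open>x \<in> X\<close> by simp
  finally have "card {y. R x y} \<le> card X - 1" .
  moreover have "0 < card X" using \<open>x \<in> X\<close> \<open>finite X\<close> card_gt_0_iff by blast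
  ultimately show ?thesis by linarith
qed

lemma three_le_card_V: "x \<in> V \<Longrightarrow> 3 \<le> card V"
  using card_neighbours_le[of x V] neighbours_subset min_degree[of x] by fastforce

lemma ex_adjacent:
  assumes "x \<in> V"
  shows "\<exists>y. R x y"
proof (rule ccontr)
  assume "\<nexists>y. R x y"
  then have "{y. R x y} = {}" by simp
  with min_degree[OF assms] show False by simp
qed

lemma ex_adjacent_in:
  assumes "X \<subseteq> V" and "x \<in> X" and "{y. R x y} \<subseteq> X" and "z \<in> V - X"
  shows "\<exists>c\<in>X. R z c"
proof (rule ccontr)
  assume "\<not> (\<exists>c\<in>X. R z c)"
  then have "{y. R z y} \<subseteq> V - X - {z}" using neighbours_subset by blast
  then have "card {y. R z y} \<le> card (V - X - {z})" using finite_V by (intro card_mono) auto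
  also have "\<dots> = card V - card X - 1"
    using assms finite_V by (simp add: card_Diff_subset finite_subset)
  finally show False
    using card_neighbours_le[OF assms(2,1,3)] min_degree[of x] min_degree[of z] assms by auto
qed

definition path_through :: "'a \<Rightarrow> 'a \<Rightarrow> 'a list \<Rightarrow> bool" where
  "path_through u v P \<longleftrightarrow>
     distinct P \<and> set P \<subseteq> V \<and> successively R P \<and> (\<exists>A B. P = A @ u # v # B)"

lemma ex_longest_path_through:
  assumes "R u v"
  obtains P where "path_through u v P" and "\<And>P'. path_through u v P' \<Longrightarrow> length P' \<le> length P"
proof -
  have "u \<noteq> v" "u \<in> V" "v \<in> V"
    using assms adjacent_in_V sympD[OF sym] irreflpD[OF irrefl] by blast+
  then have "path_through u v [u, v]"
    unfolding path_through_def
  proof (intro conjI)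
    show "\<exists>A B. [u, v] = A @ u # v # B" by (intro exI[of _ "[]"]) simp
  qed (use assms in simp_all)
  moreover have "length P < card V + 1" if "path_through u v P" for P
  proof -
    have "card (set P) \<le> card V" using that card_mono[OF finite_V] by (simp add: path_through_def)
    with that show ?thesis by (simp add: path_through_def distinct_card)
  qed
  ultimately show ?thesis
    using that ex_has_greatest_nat[of "path_through u v" "[u, v]" length "card V + 1"] by blast
qed

lemma longest_path_through_neighbours:
  assumes P: "path_through u v P"
    and longest: "\<And>P'. path_through u v P' \<Longrightarrow> length P' \<le> length P"
  shows "{y. R (hd P) y} \<subseteq> set P" and "{y. R (last P) y} \<subseteq> set P"
proof -
  have "P \<noteq> []" and uv: "\<exists>A B. P = A @ u # v # B" using P by (auto simp: path_through_def)
  show "{y. R (hd P) y} \<subseteq> set P"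
  proof
    fix y assume y: "y \<in> {y. R (hd P) y}"
    show "y \<in> set P"
    proof (rule ccontr)
      assume "y \<notin> set P"
      moreover have "\<exists>A B. y # P = A @ u # v # B" using uv by (metis append_Cons)
      ultimately have "path_through u v (y # P)"
        using P y \<open>P \<noteq> []\<close> sympD[OF sym] adjacent_in_V
        unfolding path_through_def by (auto simp: successively_Cons)
      then show False using longest by fastforce
    qed
  qed
  show "{y. R (last P) y} \<subseteq> set P"
  proof
    fix y assume y: "y \<in> {y. R (last P) y}"
    show "y \<in> set P"
    proof (rule ccontr)
      assume "y \<notin> set P"
      moreover have "\<exists>A B. P @ [y] = A @ u # v # B" using uv by fastforce
      ultimately have "path_through u v (P @ [y])"
        using P y \<open>P \<noteq> []\<close> sympD[OF sym] adjacent_in_V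
        unfolding path_through_def by (auto simp: successively_append_iff)
      then show False using longest by fastforce
    qed
  qed
qed

lemma hamiltonian_cycle_through_edge:
  assumes "R u v"
  shows "\<exists>C. hamiltonian_cycle V R (u # v # C)"
proof -
  obtain P where "path_through u v P"
    and longest: "\<And>P'. path_through u v P' \<Longrightarrow> length P' \<le> length P"
    using ex_longest_path_through[OF assms] by blast
  then have P: "hamiltonian_path (set P) R P" "set P \<subseteq> V" "P \<noteq> []"
    and uv: "\<exists>A B. P = A @ u # v # B"
    by (auto simp: path_through_def hamiltonian_path_def)
  note nbrs = longest_path_through_neighbours[OF \<open>path_through u v P\<close> longest]
  have "hd P \<in> V" "last P \<in> V" using P by auto
  moreover have "card (set P) \<le> card V" using \<open>set P \<subseteq> V\<close> finite_V by (rule card_mono[rotated])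
  ultimately have "card (set P) < card {y. R (hd P) y} + card {y. R (last P) y}"
    using min_degree[of "hd P"] min_degree[of "last P"] by linarith
  then obtain C where C: "hamiltonian_cycle (set P) R (u # v # C)"
    using uv posa_cycle_through_edge[OF sym irrefl P(1)] nbrs by blast
  show ?thesis
  proof (cases "set P = V")
    case True
    with C show ?thesis by auto
  next
    case False
    then obtain z where z: "z \<in> V - set P" using \<open>set P \<subseteq> V\<close> by blast
    then obtain c where "c \<in> set P" "R z c"
      using ex_adjacent_in[OF \<open>set P \<subseteq> V\<close> _ nbrs(1)] \<open>P \<noteq> []\<close> by auto
    then obtain P' where P': "hamiltonian_path (insert z (set P)) R P'"
      and "\<exists>A B. P' = A @ u # v # B"
      using path_through_edge_of_cycle[OF sym C, of z c] z by auto
    then have "path_through u v P'"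
      using z \<open>set P \<subseteq> V\<close> by (auto simp: path_through_def hamiltonian_path_def)
    moreover have "length P' = length P + 1"
      using P P' z distinct_card[of P] distinct_card[of P'] by (simp add: hamiltonian_path_def)
    ultimately show ?thesis using longest by fastforce
  qed
qed

lemma dense_graph_add_edge:
  assumes "u \<in> V" and "v \<in> V" and "u \<noteq> v"
  shows "dense_graph V (\<lambda>x y. R x y \<or> {x, y} = {u, v})"
proof
  show "symp (\<lambda>x y. R x y \<or> {x, y} = {u, v})"
    by (rule sympI) (auto simp: insert_commute dest: sympD[OF sym])
  show "irreflp (\<lambda>x y. R x y \<or> {x, y} = {u, v})"
    by (rule irreflpI) (use irreflpD[OF irrefl] \<open>u \<noteq> v\<close> in auto)
  show "R x y \<or> {x, y} = {u, v} \<Longrightarrow> x \<in> V" for x y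
    using adjacent_in_V assms by (auto simp: doubleton_eq_iff)
  show "card V + 1 \<le> 2 * card {y. R x y \<or> {x, y} = {u, v}}" if "x \<in> V" for x
  proof -
    have "{y. R x y \<or> {x, y} = {u, v}} \<subseteq> V"
      using adjacent_in_V sympD[OF sym] assms by (auto simp: doubleton_eq_iff)
    then have "card {y. R x y} \<le> card {y. R x y \<or> {x, y} = {u, v}}"
      using finite_V by (intro card_mono) (auto intro: finite_subset)
    then show ?thesis using min_degree[OF \<open>x \<in> V\<close>] by linarith
  qed
qed (rule finite_V)

lemma hamiltonian_connected:
  assumes "u \<in> V" and "v \<in> V" and "u \<noteq> v"
  shows "\<exists>P. hamiltonian_path V R P \<and> hd P = u \<and> last P = v"
proof -
  \<comment> \<open>Add the edge \<open>uv\<close>, take a Hamiltonian cycle through it and delete \<open>uv\<close> again.\<close>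
  define R' where "R' x y \<longleftrightarrow> R x y \<or> {x, y} = {u, v}" for x y
  interpret R': dense_graph V R'
    using dense_graph_add_edge[OF assms] unfolding R'_def[abs_def] .
  obtain C where C: "hamiltonian_cycle V R' (v # u # C)"
    using R'.hamiltonian_cycle_through_edge[of v u] by (auto simp: R'_def)
  then have R'_path: "successively R' ((u # C) @ [v])" and dist: "distinct (u # C @ [v])"
    and set: "set (u # C @ [v]) = V"
    using hamiltonian_cycle_append_commute[of V R' "[v]" "u # C"]
    by (auto simp: hamiltonian_cycle_def cyclically_def)
  have "C \<noteq> []"
    using C three_le_card_V[OF \<open>u \<in> V\<close>] distinct_card[of "v # u # C"]
    by (auto simp: hamiltonian_cycle_def)
  have "successively R (u # C)"
  proof (rule successively_mono)
    show "successively R' (u # C)"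
      using R'_path unfolding successively_append_iff by blast
    fix x y assume "x \<in> set (u # C)" "y \<in> set (u # C)" "R' x y"
    with dist show "R x y" by (auto simp: R'_def doubleton_eq_iff)
  qed
  moreover have "R (last (u # C)) v"
  proof -
    have "R' (last (u # C)) v" using R'_path unfolding successively_append_iff by simp
    moreover have "last C \<in> set C" using \<open>C \<noteq> []\<close> by simp
    ultimately have "R' (last C) v" "last C \<in> set C" using \<open>C \<noteq> []\<close> by simp_all
    with dist show ?thesis using \<open>C \<noteq> []\<close> by (auto simp: R'_def doubleton_eq_iff)
  qed
  ultimately have "successively R ((u # C) @ [v])"
    using successively_append_iff[of R "u # C" "[v]"] by simp
  then have "hamiltonian_path V R (u # C @ [v])" using dist set by (simp add: hamiltonian_path_def)
  then show ?thesis by (intro exI[of _ "u # C @ [v]"]) simp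
qed

lemma hamiltonian_path_of_chord:
  assumes Q: "hamiltonian_cycle V R Q" and "cyclically P Q" and symP: "symp P"
    and "R s t" and "\<not> P s t"
  obtains B C where "hamiltonian_path V R (rev B @ s # t # C)" and "B \<noteq> []" and "C \<noteq> []"
    and "P s (hd B)" and "P t (hd C)"
proof -
  have "s \<in> V" "t \<in> V" "s \<noteq> t"
    using \<open>R s t\<close> adjacent_in_V sympD[OF sym] irreflpD[OF irrefl] by blast+
  obtain Q1 Q2 where "Q = Q1 @ s # Q2" using Q \<open>s \<in> V\<close> by (metis hamiltonian_cycle_def split_list)
  then have Q': "hamiltonian_cycle V R (s # Q2 @ Q1)" "cyclically P (s # Q2 @ Q1)"
    using Q \<open>cyclically P Q\<close> hamiltonian_cycle_append_commute[of V R Q1 "s # Q2"]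
      cyclically_append_commute[of P Q1 "s # Q2"] by simp_all
  moreover have "t \<in> set (Q2 @ Q1)" using Q' \<open>t \<in> V\<close> \<open>s \<noteq> t\<close> by (auto simp: hamiltonian_cycle_def)
  then obtain B C where "Q2 @ Q1 = B @ t # C" by (meson split_list)
  ultimately have cycle: "hamiltonian_cycle V R (s # B @ t # C)"
    and P_path: "successively P ((s # B) @ t # C @ [s])"
    by (simp_all add: cyclically_Cons)
  have "B \<noteq> []" using P_path \<open>\<not> P s t\<close> by auto
  have "C \<noteq> []"
  proof
    assume "C = []"
    then have "P t s" using P_path unfolding successively_append_iff by simp
    with \<open>\<not> P s t\<close> show False by (blast dest: sympD[OF symP])
  qed
  have "P s (hd B)" using P_path \<open>B \<noteq> []\<close> by (cases B) auto
  have "P t (hd C)" using P_path \<open>C \<noteq> []\<close> unfolding successively_append_iff by (cases C) auto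
  have "successively R ((s # B) @ t # C)"
    using cycle by (simp add: hamiltonian_cycle_def cyclically_def)
  then have "successively R (s # B)" "successively R (t # C)"
    unfolding successively_append_iff by simp_all
  then have "successively R (rev B @ s # t # C)"
    using successively_rev_symmetric[OF sym, of "s # B"] \<open>R s t\<close>
    by (simp add: successively_append_iff)
  then have "hamiltonian_path V R (rev B @ s # t # C)"
    using cycle by (auto simp: hamiltonian_path_def hamiltonian_cycle_def)
  with that \<open>B \<noteq> []\<close> \<open>C \<noteq> []\<close> \<open>P s (hd B)\<close> \<open>P t (hd C)\<close> show ?thesis by blast
qed

text \<open>Posa's cycle for the path \<open>rev B @ s # t # C\<close> breaks one edge other than \<open>st\<close>, so \<open>st\<close>
  stays next to one of the \<open>Q\<close>-edges \<open>(hd B, s)\<close> and \<open>(t, hd C)\<close>.\<close>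

lemma hamiltonian_cycle_with_chord:
  assumes "hamiltonian_cycle V R Q" and "cyclically P Q" and symP: "symp P"
    and "R s t" and "\<not> P s t"
  shows "\<exists>a b c X. hamiltonian_cycle V R (a # b # c # X) \<and> P a b \<noteq> P b c"
proof -
  obtain B C where "hamiltonian_path V R (rev B @ s # t # C)" and "B \<noteq> []" "C \<noteq> []"
    and "P s (hd B)" "P t (hd C)"
    using hamiltonian_path_of_chord[OF assms] by blast
  define W where "W = rev B @ s # t # C"
  have W: "hamiltonian_path V R W" unfolding W_def by fact
  have "W \<noteq> []" by (simp add: W_def)
  then have "hd W \<in> V" "last W \<in> V" using W by (auto simp: hamiltonian_path_def)
  then have "card V < card {y. R (hd W) y} + card {y. R (last W) y}"
    using min_degree[of "hd W"] min_degree[of "last W"] by linarith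
  then obtain P1 P2 where P12: "W = P1 @ P2" "length P1 \<noteq> Suc (length B)"
    and cycle12: "hamiltonian_cycle V R (P1 @ rev P2)"
    using posa_hamiltonian_cycle[OF sym irrefl W] neighbours_subset by blast
  obtain X a b c Y where W_split: "W = X @ [a, b, c] @ Y" and "P a b \<noteq> P b c"
    and kept: "length P1 \<le> length X \<or> length X + length [a, b, c] \<le> length P1"
  proof (cases "length P1 = length B")
    case True
    have "W = rev B @ [s, t, hd C] @ tl C" using \<open>C \<noteq> []\<close> by (simp add: W_def)
    then show ?thesis
      using that[of "rev B" s t "hd C" "tl C"] True \<open>\<not> P s t\<close> \<open>P t (hd C)\<close> by simp
  next
    case False
    have "W = rev (tl B) @ [hd B, s, t] @ C" using \<open>B \<noteq> []\<close> by (cases B) (simp_all add: W_def)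
    moreover have "length P1 \<le> length (rev (tl B)) \<or>
        length (rev (tl B)) + length [hd B, s, t] \<le> length P1"
      using False P12(2) \<open>B \<noteq> []\<close> by (cases B) auto
    moreover have "P (hd B) s" using \<open>P s (hd B)\<close> by (rule sympD[OF symP])
    ultimately show ?thesis using that[of "rev (tl B)" "hd B" s t C] \<open>\<not> P s t\<close> by blast
  qed
  have "P1 @ P2 = X @ [a, b, c] @ Y" using P12(1) W_split by simp
  then obtain Z where "hamiltonian_cycle V R ([a, b, c] @ Z)"
    using hamiltonian_cycle_keeps_block[OF sym cycle12 _ kept] by blast
  with \<open>P a b \<noteq> P b c\<close> show ?thesis by auto
qed

end

section \<open>Properly coloured Hamiltonian cycles\<close>

lemma alternating_choice:
  assumes "Fs \<noteq> []" and "\<forall>F\<in>set Fs. \<exists>x\<in>F. \<exists>y\<in>F. h x \<noteq> h y"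
    and "\<exists>x\<in>last Fs. \<exists>y\<in>last Fs. h x \<noteq> h y \<and> h x \<noteq> h z \<and> h y \<noteq> h z"
  shows "\<exists>xs. list_all2 (\<in>) xs Fs \<and> successively (\<lambda>x y. h x \<noteq> h y) (x0 # xs @ [z])"
  using assms
proof (induction Fs arbitrary: x0)
  case (Cons F Fs)
  show ?case
  proof (cases "Fs = []")
    case True
    then obtain x y where "x \<in> F" "y \<in> F" "h x \<noteq> h y" "h x \<noteq> h z" "h y \<noteq> h z"
      using Cons.prems(3) by auto
    then obtain w where "w \<in> F" "h w \<noteq> h x0" "h w \<noteq> h z"
      by (cases "h x = h x0") auto
    with True show ?thesis by (intro exI[of _ "[w]"]) simp
  next
    case False
    obtain x y where "x \<in> F" "y \<in> F" "h x \<noteq> h y" using Cons.prems(2) by auto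
    then obtain w where "w \<in> F" "h w \<noteq> h x0"
      by (cases "h x = h x0") auto
    obtain xs where "list_all2 (\<in>) xs Fs" "successively (\<lambda>x y. h x \<noteq> h y) (w # xs @ [z])"
      using Cons.IH[of w] Cons.prems False by auto
    with \<open>w \<in> F\<close> \<open>h w \<noteq> h x0\<close> show ?thesis by (intro exI[of _ "w # xs"]) simp
  qed
qed simp

lemma ex_colour_avoided_by_two:
  assumes "\<exists>x\<in>A. \<exists>y\<in>A. x \<noteq> y" and "\<exists>x\<in>B. \<exists>y\<in>B. x \<noteq> y" and "A \<noteq> B"
  shows "\<exists>z\<in>B. \<exists>x\<in>A. \<exists>y\<in>A. x \<noteq> y \<and> x \<noteq> z \<and> y \<noteq> z"
proof (cases "B \<subseteq> A")
  case True
  with \<open>A \<noteq> B\<close> obtain x where "x \<in> A" "x \<notin> B" by blast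
  moreover obtain z z' where "z \<in> B" "z' \<in> B" "z \<noteq> z'" using assms(2) by blast
  ultimately have "x \<noteq> z" "x \<noteq> z'" "z \<in> A" "z' \<in> A" using True by auto
  with \<open>x \<in> A\<close> \<open>z \<in> B\<close> \<open>z \<noteq> z'\<close> show ?thesis by metis
next
  case False
  then obtain z where "z \<in> B" "z \<notin> A" by blast
  moreover obtain x y where "x \<in> A" "y \<in> A" "x \<noteq> y" using assms(1) by blast
  ultimately show ?thesis by metis
qed

lemma two_elements_avoiding:
  assumes "\<alpha> \<in> S" and "\<beta> \<in> S" and "\<alpha> \<noteq> \<beta>"
    and "(\<exists>\<gamma>\<in>S. \<gamma> \<noteq> \<alpha> \<and> \<gamma> \<noteq> \<beta>) \<or> \<delta> \<notin> S"
  shows "\<exists>\<alpha>'\<in>S. \<exists>\<beta>'\<in>S. \<alpha>' \<noteq> \<beta>' \<and> \<alpha>' \<noteq> \<delta> \<and> \<beta>' \<noteq> \<delta>"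
proof (cases "\<delta> = \<alpha> \<or> \<delta> = \<beta>")
  case True
  with assms obtain \<gamma> where "\<gamma> \<in> S" "\<gamma> \<noteq> \<alpha>" "\<gamma> \<noteq> \<beta>" by blast
  with True assms(1-3) show ?thesis by blast
next
  case False
  with assms(1-3) show ?thesis by blast
qed

lemma edges_between_commute: "edges_between E ends x y = edges_between E ends y x"
  by (auto simp: edges_between_def insert_commute)

lemma pc_hamiltonian_cycleI:
  assumes "distinct vs" and "set vs = V"
    and "list_all2 (\<in>) fs (map2 (edges_between E ends) vs (rotate1 vs))"
    and "cyclically (\<lambda>e f. phi e \<noteq> phi f) fs"
  shows "pc_hamiltonian_cycle V E ends phi vs fs"
proof -
  have "length fs = length vs" using assms(3) by (simp add: list_all2_lengthD)
  with assms show ?thesis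
    unfolding pc_hamiltonian_cycle_def Let_def
    by (auto simp: list_all2_conv_all_nth nth_rotate1 cyclically_conv_nth)
qed

locale edge_colouring =
  fixes V :: "'a set" and E :: "'e set" and ends :: "'e \<Rightarrow> 'a set" and phi :: "'e \<Rightarrow> nat"
begin

definition colours :: "'a \<Rightarrow> 'a \<Rightarrow> nat set" where
  "colours x y = phi ` edges_between E ends x y"

definition dym_adjacent :: "'a \<Rightarrow> 'a \<Rightarrow> bool" where
  "dym_adjacent x y \<longleftrightarrow> x \<in> V \<and> y \<in> V \<and>
     (\<exists>e\<in>edges_between E ends x y. \<exists>f\<in>edges_between E ends x y. phi e \<noteq> phi f)"

lemma colours_commute: "colours x y = colours y x"
  by (simp add: colours_def edges_between_commute)

lemma dym_adjacent_two_colours: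
  "dym_adjacent x y \<Longrightarrow> \<exists>\<alpha>\<in>colours x y. \<exists>\<beta>\<in>colours x y. \<alpha> \<noteq> \<beta>"
  by (auto simp: dym_adjacent_def colours_def)

lemma dense_graph_dym_adjacent:
  assumes G: "colored_multigraph V E ends phi c"
    and dym: "\<forall>x\<in>V. card V + 1 \<le> 2 * delta_dym V E ends phi x"
  shows "dense_graph V dym_adjacent"
proof
  show "finite V" using G by (simp add: colored_multigraph_def)
  show "symp dym_adjacent"
    by (rule sympI) (auto simp: dym_adjacent_def edges_between_commute)
  have "edges_between E ends x x = {}" for x
    using G by (auto simp: colored_multigraph_def edges_between_def)
  then show "irreflp dym_adjacent" by (auto simp: dym_adjacent_def intro: irreflpI)
  show "dym_adjacent x y \<Longrightarrow> x \<in> V" for x y by (simp add: dym_adjacent_def)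
  show "card V + 1 \<le> 2 * card {y. dym_adjacent x y}" if "x \<in> V" for x
    using dym that by (simp add: delta_dym_def dym_adjacent_def conj_assoc)
qed

lemma pc_cycle_of_path:
  assumes "hamiltonian_path V dym_adjacent (W @ [b])" and "W \<noteq> []"
    and "e0 \<in> edges_between E ends b (hd W)"
    and "\<exists>\<alpha>\<in>colours (last W) b. \<exists>\<beta>\<in>colours (last W) b. \<alpha> \<noteq> \<beta> \<and> \<alpha> \<noteq> phi e0 \<and> \<beta> \<noteq> phi e0"
  shows "has_pc_hamiltonian_cycle V E ends phi"
proof -
  define Fs where "Fs = map2 (edges_between E ends) W (tl W @ [b])"
  have "zip W (tl W @ [b]) = zip (W @ [b]) (tl (W @ [b]))"
    using zip_append[of W "tl W @ [b]" "[b]" "[]"] \<open>W \<noteq> []\<close> by simp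
  then have "\<forall>F\<in>set Fs. \<exists>e\<in>F. \<exists>f\<in>F. phi e \<noteq> phi f"
    using assms(1) successively_zip_tl[of dym_adjacent "W @ [b]"]
    by (auto simp: Fs_def hamiltonian_path_def dym_adjacent_def)
  moreover have "last Fs = edges_between E ends (last W) b"
    using \<open>W \<noteq> []\<close> by (simp add: Fs_def last_map last_zip)
  moreover have "Fs \<noteq> []" using \<open>W \<noteq> []\<close> by (simp add: Fs_def)
  ultimately obtain xs where xs: "list_all2 (\<in>) xs Fs"
    and alternating: "successively (\<lambda>e f. phi e \<noteq> phi f) (e0 # xs @ [e0])"
    using alternating_choice[of Fs phi e0 e0] assms(4) by (auto simp: colours_def)
  obtain w W' where W: "W = w # W'" using \<open>W \<noteq> []\<close> by (cases W) auto
  have "pc_hamiltonian_cycle V E ends phi (b # W) (e0 # xs)"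
  proof (rule pc_hamiltonian_cycleI)
    show "distinct (b # W)" "set (b # W) = V"
      using assms(1) by (auto simp: hamiltonian_path_def)
    show "list_all2 (\<in>) (e0 # xs) (map2 (edges_between E ends) (b # W) (rotate1 (b # W)))"
      using xs assms(3) by (simp add: Fs_def W)
    show "cyclically (\<lambda>e f. phi e \<noteq> phi f) (e0 # xs)"
      using alternating by (simp add: cyclically_Cons)
  qed
  then show ?thesis by (auto simp: has_pc_hamiltonian_cycle_def)
qed

lemma pc_cycle_of_colour_change:
  assumes cycle: "hamiltonian_cycle V dym_adjacent (a # b # c # X)"
    and "colours a b \<noteq> colours b c"
  shows "has_pc_hamiltonian_cycle V E ends phi"
proof -
  have "hamiltonian_cycle V dym_adjacent ((c # X @ [a]) @ [b])"
    using cycle hamiltonian_cycle_append_commute[of V dym_adjacent "[a, b]" "c # X"] by simp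
  then have path: "hamiltonian_path V dym_adjacent ((c # X @ [a]) @ [b])"
    by (auto simp: hamiltonian_cycle_def hamiltonian_path_def cyclically_def)
  have "dym_adjacent a b" "dym_adjacent b c"
    using cycle by (auto simp: hamiltonian_cycle_def cyclically_def)
  then obtain \<gamma> where "\<gamma> \<in> colours b c"
    and avoid: "\<exists>\<alpha>\<in>colours a b. \<exists>\<beta>\<in>colours a b. \<alpha> \<noteq> \<beta> \<and> \<alpha> \<noteq> \<gamma> \<and> \<beta> \<noteq> \<gamma>"
    using ex_colour_avoided_by_two[OF dym_adjacent_two_colours dym_adjacent_two_colours
        \<open>colours a b \<noteq> colours b c\<close>] by blast
  then obtain e0 where "e0 \<in> edges_between E ends b c" "phi e0 = \<gamma>"
    by (auto simp: colours_def)
  with path avoid show ?thesis using pc_cycle_of_path[of "c # X @ [a]" b e0] by simp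
qed

lemma common_colours:
  assumes "dense_graph V dym_adjacent" and no_pc: "\<not> has_pc_hamiltonian_cycle V E ends phi"
  shows "\<exists>S. \<forall>x y. dym_adjacent x y \<longrightarrow> colours x y = S"
proof (cases "\<exists>x y. dym_adjacent x y")
  case True
  interpret dense_graph V dym_adjacent by fact
  obtain x y where "dym_adjacent x y" using True by blast
  then obtain C where Q: "hamiltonian_cycle V dym_adjacent (x # y # C)"
    using hamiltonian_cycle_through_edge by blast
  have no_change: "colours a b = colours b c"
    if "hamiltonian_cycle V dym_adjacent (a # b # c # X)" for a b c X
    using pc_cycle_of_colour_change[OF that] no_pc by blast
  have "C \<noteq> []"
    using Q three_le_card_V[of x] distinct_card[of "x # y # C"] adjacent_in_V[OF \<open>dym_adjacent x y\<close>]
    by (auto simp: hamiltonian_cycle_def)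
  then have const: "cyclically (\<lambda>a b. colours a b = colours x y) (x # y # C)"
    using cyclically_const_of_rotations[of "x # y # C" colours, OF _ refl]
      no_change Q hamiltonian_cycle_rotate by metis
  have sym_same: "symp (\<lambda>a b. colours a b = colours x y)"
    by (rule sympI) (simp add: colours_commute)
  have "colours s t = colours x y" if st: "dym_adjacent s t" for s t
  proof (rule ccontr)
    assume "colours s t \<noteq> colours x y"
    then obtain a b c X where "hamiltonian_cycle V dym_adjacent (a # b # c # X)"
      and "(colours a b = colours x y) \<noteq> (colours b c = colours x y)"
      using hamiltonian_cycle_with_chord[OF Q const sym_same st] by blast
    then show False using no_change by blast
  qed
  then show ?thesis by blast
qed blast

lemma pc_cycle_of_edge:
  assumes "dense_graph V dym_adjacent" and S: "\<And>x y. dym_adjacent x y \<Longrightarrow> colours x y = S"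
    and "x \<in> V" and "y \<in> V" and "x \<noteq> y" and "e \<in> edges_between E ends x y"
    and "\<exists>\<alpha>\<in>S. \<exists>\<beta>\<in>S. \<alpha> \<noteq> \<beta> \<and> \<alpha> \<noteq> phi e \<and> \<beta> \<noteq> phi e"
  shows "has_pc_hamiltonian_cycle V E ends phi"
proof -
  interpret dense_graph V dym_adjacent by fact
  obtain P where P: "hamiltonian_path V dym_adjacent P" "hd P = y" "last P = x"
    using hamiltonian_connected \<open>x \<in> V\<close> \<open>y \<in> V\<close> \<open>x \<noteq> y\<close> by metis
  have "3 \<le> length P"
    using P(1) three_le_card_V[OF \<open>x \<in> V\<close>] distinct_card[of P] by (auto simp: hamiltonian_path_def)
  obtain W where W: "P = W @ [x]"
    using P(3) \<open>3 \<le> length P\<close> append_butlast_last_id[of P] by (metis list.size(3) not_numeral_le_zero)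
  with \<open>3 \<le> length P\<close> have "W \<noteq> []" by auto
  with P(2) W have "hd W = y" by simp
  have "dym_adjacent (last W) x"
    using P(1) \<open>W \<noteq> []\<close> unfolding W hamiltonian_path_def successively_append_iff by simp
  then have "colours (last W) x = S" by (rule S)
  with P(1) \<open>W \<noteq> []\<close> \<open>hd W = y\<close> assms(6,7) show ?thesis
    using pc_cycle_of_path[of W x e] by (simp add: W edges_between_commute)
qed

lemma edge_avoiding_two_colours:
  assumes G: "colored_multigraph V E ends phi c"
    and three_colors: "\<exists>x\<in>V. \<exists>e1\<in>E. \<exists>e2\<in>E. \<exists>e3\<in>E.
                          x \<in> ends e1 \<and> x \<in> ends e2 \<and> x \<in> ends e3 \<and>
                          phi e1 \<noteq> phi e2 \<and> phi e1 \<noteq> phi e3 \<and> phi e2 \<noteq> phi e3"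
    and S: "\<And>x y. dym_adjacent x y \<Longrightarrow> colours x y = S" and "dym_adjacent x0 y0"
  shows "\<exists>x\<in>V. \<exists>y\<in>V. \<exists>e\<in>edges_between E ends x y.
           x \<noteq> y \<and> (\<exists>\<alpha>\<in>S. \<exists>\<beta>\<in>S. \<alpha> \<noteq> \<beta> \<and> \<alpha> \<noteq> phi e \<and> \<beta> \<noteq> phi e)"
proof -
  have ends: "ends e \<subseteq> V" "card (ends e) = 2" if "e \<in> E" for e
    using G that by (auto simp: colored_multigraph_def)
  have edge: "\<exists>y. x \<noteq> y \<and> e \<in> edges_between E ends x y" if "e \<in> E" "x \<in> ends e" for e x
    using ends(2)[OF that(1)] that by (auto simp: card_2_iff edges_between_def insert_commute)
  obtain \<alpha> \<beta> where "\<alpha> \<in> S" "\<beta> \<in> S" "\<alpha> \<noteq> \<beta>"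
    using dym_adjacent_two_colours[OF \<open>dym_adjacent x0 y0\<close>] S[OF \<open>dym_adjacent x0 y0\<close>] by blast
  obtain x y e where "x \<noteq> y" and e: "e \<in> edges_between E ends x y"
    and "(\<exists>\<gamma>\<in>S. \<gamma> \<noteq> \<alpha> \<and> \<gamma> \<noteq> \<beta>) \<or> phi e \<notin> S"
  proof (cases "\<exists>\<gamma>\<in>S. \<gamma> \<noteq> \<alpha> \<and> \<gamma> \<noteq> \<beta>")
    case True
    obtain e where "e \<in> edges_between E ends x0 y0"
      using \<open>dym_adjacent x0 y0\<close> by (auto simp: dym_adjacent_def)
    then have "e \<in> E" "x0 \<in> ends e" by (simp_all add: edges_between_def)
    with edge True that show ?thesis by blast
  next
    case False
    obtain x e1 e2 e3 where "e1 \<in> E" "e2 \<in> E" "e3 \<in> E" "x \<in> ends e1" "x \<in> ends e2" "x \<in> ends e3"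
      "phi e1 \<noteq> phi e2" "phi e1 \<noteq> phi e3" "phi e2 \<noteq> phi e3"
      using three_colors by blast
    with False obtain e where "e \<in> E" "x \<in> ends e" "phi e \<notin> S" by metis
    with edge that show ?thesis by blast
  qed
  moreover have "x \<in> V" "y \<in> V" using e ends(1) by (auto simp: edges_between_def)
  ultimately show ?thesis
    using two_elements_avoiding[OF \<open>\<alpha> \<in> S\<close> \<open>\<beta> \<in> S\<close> \<open>\<alpha> \<noteq> \<beta>\<close>] by blast
qed

end

theorem mainTheorem11:
  fixes V :: "'a set" and E :: "'e set" and ends :: "'e \<Rightarrow> 'a set"
    and phi :: "'e \<Rightarrow> nat" and c :: nat
  assumes G: "colored_multigraph V E ends phi c"
    and two_colors: "\<forall>x\<in>V. \<exists>e\<in>E. \<exists>f\<in>E. x \<in> ends e \<and> x \<in> ends f \<and> phi e \<noteq> phi f"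
    and dym: "\<forall>x\<in>V. 2 * delta_dym V E ends phi x \<ge> card V + 1"
    and three_colors: "\<exists>x\<in>V. \<exists>e1\<in>E. \<exists>e2\<in>E. \<exists>e3\<in>E.
                          x \<in> ends e1 \<and> x \<in> ends e2 \<and> x \<in> ends e3 \<and>
                          phi e1 \<noteq> phi e2 \<and> phi e1 \<noteq> phi e3 \<and> phi e2 \<noteq> phi e3"
  shows "has_pc_hamiltonian_cycle V E ends phi"
proof (rule ccontr)
  assume no_pc: "\<not> has_pc_hamiltonian_cycle V E ends phi"
  interpret edge_colouring V E ends phi .
  have dense: "dense_graph V dym_adjacent"
    using dense_graph_dym_adjacent[OF G] dym by simp
  then interpret dense_graph V dym_adjacent .
  obtain x0 y0 where "dym_adjacent x0 y0"
    using three_colors ex_adjacent by blast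
  obtain S where S: "\<And>x y. dym_adjacent x y \<Longrightarrow> colours x y = S"
    using common_colours[OF dense no_pc] by blast
  obtain x y e where "x \<in> V" "y \<in> V" "x \<noteq> y" "e \<in> edges_between E ends x y"
    and "\<exists>\<alpha>\<in>S. \<exists>\<beta>\<in>S. \<alpha> \<noteq> \<beta> \<and> \<alpha> \<noteq> phi e \<and> \<beta> \<noteq> phi e"
    using edge_avoiding_two_colours[OF G three_colors S \<open>dym_adjacent x0 y0\<close>] by blast
  with dense S no_pc show False using pc_cycle_of_edge by blast
qed

end
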